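(* Let $(X_n,\eta_n)$ be a time-homogeneous Markov chain on a locally finite set $\Sigma\subseteq\mathbb{R}_+\times S$ ($S$ finite). Suppose that for some $p>2$ there is $C_p<\infty$ with $\mathbb{E}_{x,i}[|X_{n+1}-X_n|^p]\le C_p$ for all $(x,i)\in\Sigma$, and suppose there exist $c_i\in\mathbb{R}$, $s_i^2\ge0$ (at least one $s_i^2\ne0$) with $\mu_i(x)=c_i/x+o(x^{-1})$ and $\sigma_i^2(x)=s_i^2+o(1)$ as $x\to\infty$. Let $\zeta\in(\frac1{p-1},1)$ and $E_n=\{|X_{n+1}-X_n|\le X_n^\zeta\}$. Then for any $r\in\mathbb{R}$, as $x\to\infty$, \[\mathbb{E}_{x,i}[(X_{n+1}^r-X_n^r)\mathbf 1(E_n)]=rx^{r-2}\Big(c_i+\frac{r-1}2s_i^2+o(1)\Big).\]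
   Context: $\mathbb{E}_{x,i}[\cdot]=\mathbb{E}[\cdot\mid X_n=x,\eta_n=i]$; $\mu_i(x)=\mathbb{E}_{x,i}[X_{n+1}-X_n]$; $\sigma_i^2(x)=\mathbb{E}_{x,i}[(X_{n+1}-X_n)^2]$. *)

theory Defs
  imports "HOL-Probability.Probability"
begin

text \<open>The time-homogeneous Markov chain (X_n, eta_n) on Sigma is represented by its
one-step transition kernel K: K (x,i) is the law of (X_{n+1}, eta_{n+1}) given
X_n = x, eta_n = i. Since Sigma is locally finite it is countable, so the kernel is
a discrete distribution (pmf).\<close>

definition locally_finite_state_space :: "(real \<times> 's) set \<Rightarrow> bool" where
  "locally_finite_state_space \<Sigma> \<longleftrightarrow>
     (\<forall>z\<in>\<Sigma>. fst z \<ge> 0) \<and> (\<forall>b::real. finite {z\<in>\<Sigma>. fst z \<le> b})"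

definition mu :: "(real \<times> 's \<Rightarrow> (real \<times> 's) pmf) \<Rightarrow> 's \<Rightarrow> real \<Rightarrow> real" where
  "mu K i x = measure_pmf.expectation (K (x, i)) (\<lambda>y. fst y - x)"

definition sigma2 :: "(real \<times> 's \<Rightarrow> (real \<times> 's) pmf) \<Rightarrow> 's \<Rightarrow> real \<Rightarrow> real" where
  "sigma2 K i x = measure_pmf.expectation (K (x, i)) (\<lambda>y. (fst y - x)^2)"

end

theory Submission
  imports Defs
begin

text \<open>Write d = X_{n+1} - x. On E_n we have |d| <= x^zeta <= x/2, so Taylor's theorem for t^r at x
gives (x + d)^r - x^r = r x^(r-1) d + r(r-1)/2 x^(r-2) d^2 + O(x^(r-3) x^zeta d^2). Taking
expectations, the truncated first and second moments differ from mu_i(x) and sigma_i^2(x) by at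
most C_p x^(zeta(1-p)) and C_p x^(zeta(2-p)) (Markov's inequality for the p-th moment), and the
remainder contributes O(x^(r-2) x^(zeta-1)). Since zeta (p-1) > 1, all three errors are o(x^(r-2)),
while the drift and variance asymptotics turn the leading terms into r x^(r-2) (c_i + (r-1)/2 s_i^2).\<close>

lemma powr_le_two_powr_abs_mult:
  fixes x t a :: real
  assumes "x > 0" "x / 2 \<le> t" "t \<le> 2 * x"
  shows "t powr a \<le> 2 powr \<bar>a\<bar> * x powr a"
proof -
  have t: "t > 0" using assms by linarith
  have "(t / x) powr a \<le> 2 powr \<bar>a\<bar>"
  proof (cases "a \<ge> 0")
    case True
    have "t / x \<le> 2" using assms by (simp add: divide_le_eq)
    then show ?thesis using True t assms by (simp add: powr_mono2)
  next
    case False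
    have "x / t \<le> 2" using assms t by (simp add: divide_le_eq)
    then have "(x / t) powr (- a) \<le> 2 powr (- a)" using False t assms by (intro powr_mono2) auto
    moreover have "(t / x) powr a = (x / t) powr (- a)"
      using t assms by (simp add: powr_minus_divide powr_divide)
    ultimately show ?thesis using False by simp
  qed
  moreover have "t powr a = (t / x) powr a * x powr a"
    using assms t by (simp add: powr_divide)
  ultimately show ?thesis by (simp add: mult_right_mono)
qed

lemma powr_taylor2_remainder:
  fixes x y r :: real
  assumes x: "x > 0" and y: "x / 2 \<le> y" "y \<le> 2 * x"
  shows "\<bar>y powr r - x powr r - r * x powr (r - 1) * (y - x) - r * (r - 1) / 2 * x powr (r - 2) * (y - x)^2\<bar>
     \<le> \<bar>r * (r - 1) * (r - 2)\<bar> / 6 * 2 powr \<bar>r - 3\<bar> * x powr (r - 3) * \<bar>y - x\<bar>^3"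
proof (cases "y = x")
  case False
  define D where "D = (\<lambda>m::nat. \<lambda>t::real. (\<Prod>k<m. (r - real k)) * t powr (r - real m))"
  have D0: "D 0 = (\<lambda>t. t powr r)" unfolding D_def by simp
  have D_deriv: "\<forall>m t. m < 3 \<and> x / 2 \<le> t \<and> t \<le> 2 * x \<longrightarrow> DERIV (D m) t :> D (Suc m) t"
  proof (intro allI impI)
    fix m :: nat and t :: real
    assume "m < 3 \<and> x / 2 \<le> t \<and> t \<le> 2 * x"
    then have "t > 0" using x by linarith
    then have "DERIV (\<lambda>t. (\<Prod>k<m. (r - real k)) * t powr (r - real m)) t :>
        (\<Prod>k<m. (r - real k)) * ((r - real m) * t powr (r - real m - 1))"
      by (intro DERIV_cmult has_real_derivative_powr)
    then show "DERIV (D m) t :> D (Suc m) t"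
      unfolding D_def by (simp add: algebra_simps diff_diff_eq)
  qed
  obtain t where t: "if y < x then y < t \<and> t < x else x < t \<and> t < y"
    and taylor: "y powr r = (\<Sum>m<3. D m x / fact m * (y - x)^m) + D 3 t / fact 3 * (y - x)^3"
    using Taylor[of 3 D "\<lambda>t. t powr r" "x / 2" "2 * x" x y, OF _ D0 D_deriv] x y False by auto
  have t_bounds: "x / 2 \<le> t" "t \<le> 2 * x" using t y by (auto split: if_splits)
  have low_order: "(\<Sum>m<3. D m x / fact m * (y - x)^m)
      = x powr r + r * x powr (r - 1) * (y - x) + r * (r - 1) / 2 * x powr (r - 2) * (y - x)^2"
    by (simp add: D_def numeral_3_eq_3 lessThan_Suc eval_nat_numeral fact_numeral)
  have third_order: "D 3 t / fact 3 = r * (r - 1) * (r - 2) / 6 * t powr (r - 3)"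
    by (simp add: D_def numeral_3_eq_3 lessThan_Suc eval_nat_numeral fact_numeral)
  have "\<bar>y powr r - x powr r - r * x powr (r - 1) * (y - x) - r * (r - 1) / 2 * x powr (r - 2) * (y - x)^2\<bar>
     = \<bar>r * (r - 1) * (r - 2)\<bar> / 6 * t powr (r - 3) * \<bar>y - x\<bar>^3"
    using taylor low_order third_order by (simp add: abs_mult power_abs)
  also have "\<dots> \<le> \<bar>r * (r - 1) * (r - 2)\<bar> / 6 * (2 powr \<bar>r - 3\<bar> * x powr (r - 3)) * \<bar>y - x\<bar>^3"
    using powr_le_two_powr_abs_mult[OF x t_bounds] by (intro mult_right_mono mult_left_mono) auto
  finally show ?thesis by (simp add: mult.assoc)
qed simp

lemma abs_powr_le_one_plus_abs_powr:
  fixes d s p :: real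
  assumes "0 \<le> s" "s \<le> p"
  shows "\<bar>d\<bar> powr s \<le> 1 + \<bar>d\<bar> powr p"
proof (cases "\<bar>d\<bar> \<le> 1")
  case True
  then have "\<bar>d\<bar> powr s \<le> 1" using assms by (simp add: powr_le1)
  then show ?thesis by (smt (verit) powr_ge_zero)
next
  case False
  then have "\<bar>d\<bar> powr s \<le> \<bar>d\<bar> powr p" using assms by (intro powr_mono) auto
  then show ?thesis by simp
qed

lemma abs_powr_le_tail_powr:
  fixes d s p a :: real
  assumes "s \<le> p" "0 < a" "a < \<bar>d\<bar>"
  shows "\<bar>d\<bar> powr s \<le> a powr (s - p) * \<bar>d\<bar> powr p"
proof -
  have "\<bar>d\<bar> powr (s - p) \<le> a powr (s - p)" using assms by (intro powr_mono2') auto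
  then have "\<bar>d\<bar> powr p * \<bar>d\<bar> powr (s - p) \<le> \<bar>d\<bar> powr p * a powr (s - p)"
    by (simp add: mult_left_mono)
  moreover have "\<bar>d\<bar> powr p * \<bar>d\<bar> powr (s - p) = \<bar>d\<bar> powr s"
    by (simp add: powr_add[symmetric])
  ultimately show ?thesis by (simp add: mult.commute)
qed

lemma integrable_pmf_dominated_by_moment:
  fixes q :: "'a pmf" and d f :: "'a \<Rightarrow> real"
  assumes int: "integrable q (\<lambda>y. \<bar>d y\<bar> powr p)" and s: "0 \<le> s" "s \<le> p"
    and f: "\<And>y. \<bar>f y\<bar> \<le> \<bar>d y\<bar> powr s"
  shows "integrable q f"
proof (rule Bochner_Integration.integrable_bound)
  show "integrable q (\<lambda>y. 1 + \<bar>d y\<bar> powr p)" using int by simp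
  show "AE y in q. norm (f y) \<le> norm (1 + \<bar>d y\<bar> powr p)"
  proof (rule AE_I2)
    fix y
    have "\<bar>f y\<bar> \<le> 1 + \<bar>d y\<bar> powr p"
      using f[of y] abs_powr_le_one_plus_abs_powr[OF s, of "d y"] by linarith
    then show "norm (f y) \<le> norm (1 + \<bar>d y\<bar> powr p)" by simp
  qed
qed simp

lemma pmf_tail_expectation_le:
  fixes q :: "'a pmf" and d f :: "'a \<Rightarrow> real"
  assumes int: "integrable q (\<lambda>y. \<bar>d y\<bar> powr p)"
    and bnd: "measure_pmf.expectation q (\<lambda>y. \<bar>d y\<bar> powr p) \<le> C"
    and s: "s \<le> p" and a: "0 < a"
    and f: "\<And>y. \<bar>f y\<bar> \<le> \<bar>d y\<bar> powr s"
  shows "\<bar>measure_pmf.expectation q (\<lambda>y. if \<bar>d y\<bar> \<le> a then 0 else f y)\<bar> \<le> a powr (s - p) * C"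
proof -
  have tail: "\<bar>if \<bar>d y\<bar> \<le> a then 0 else f y\<bar> \<le> a powr (s - p) * \<bar>d y\<bar> powr p" for y
    using f[of y] abs_powr_le_tail_powr[OF s a, of "d y"] by auto
  have "\<bar>measure_pmf.expectation q (\<lambda>y. if \<bar>d y\<bar> \<le> a then 0 else f y)\<bar>
      \<le> measure_pmf.expectation q (\<lambda>y. \<bar>if \<bar>d y\<bar> \<le> a then 0 else f y\<bar>)"
    using integral_norm_bound[of q "\<lambda>y. if \<bar>d y\<bar> \<le> a then 0 else f y"] by simp
  also have "\<dots> \<le> measure_pmf.expectation q (\<lambda>y. a powr (s - p) * \<bar>d y\<bar> powr p)"
    using int tail by (intro integral_mono') auto
  also have "\<dots> \<le> a powr (s - p) * C" using bnd by (simp add: mult_left_mono)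
  finally show ?thesis .
qed

lemma pmf_expectation_split_if:
  fixes q :: "'a pmf" and f :: "'a \<Rightarrow> real"
  assumes f: "integrable q f"
  shows "integrable q (\<lambda>y. if P y then f y else 0)"
    and "measure_pmf.expectation q f = measure_pmf.expectation q (\<lambda>y. if P y then f y else 0)
      + measure_pmf.expectation q (\<lambda>y. if P y then 0 else f y)"
proof -
  show head: "integrable q (\<lambda>y. if P y then f y else 0)"
    by (rule Bochner_Integration.integrable_bound[OF f]) (simp_all add: AE_I2)
  have tail: "integrable q (\<lambda>y. if P y then 0 else f y)"
    by (rule Bochner_Integration.integrable_bound[OF f]) (simp_all add: AE_I2)
  have "f = (\<lambda>y. (if P y then f y else 0) + (if P y then 0 else f y))" by auto
  then show "measure_pmf.expectation q f = measure_pmf.expectation q (\<lambda>y. if P y then f y else 0)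
      + measure_pmf.expectation q (\<lambda>y. if P y then 0 else f y)"
    using Bochner_Integration.integral_add[OF head tail] by simp
qed

lemma pmf_truncated_taylor_remainder_le:
  fixes q :: "'a pmf" and Y :: "'a \<Rightarrow> real" and x a p C r :: real
  assumes x: "x > 0" and a: "0 < a" "a \<le> x / 2" and p: "p \<ge> 2"
    and int: "integrable q (\<lambda>y. \<bar>Y y - x\<bar> powr p)"
    and bnd: "measure_pmf.expectation q (\<lambda>y. \<bar>Y y - x\<bar> powr p) \<le> C"
  defines "R \<equiv> \<lambda>y. if \<bar>Y y - x\<bar> \<le> a then Y y powr r - x powr r - r * x powr (r - 1) * (Y y - x)
      - r * (r - 1) / 2 * x powr (r - 2) * (Y y - x)^2 else 0"
  shows "integrable q R"
    and "\<bar>measure_pmf.expectation q R\<bar>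
      \<le> \<bar>r\<bar> * x powr (r - 2) * (\<bar>(r - 1) * (r - 2)\<bar> / 6 * 2 powr \<bar>r - 3\<bar> * (1 + C) * (a / x))"
proof -
  define B where "B = \<bar>(r - 1) * (r - 2)\<bar> / 6 * 2 powr \<bar>r - 3\<bar>"
  define k where "k = \<bar>r\<bar> * B * x powr (r - 3) * a"
  have k_nonneg: "0 \<le> k" using a by (simp add: k_def B_def)
  have int_d2: "integrable q (\<lambda>y. (Y y - x)^2)"
    by (rule integrable_pmf_dominated_by_moment[OF int, of 2]) (use p in auto)
  have R_bound: "\<bar>R y\<bar> \<le> k * (Y y - x)^2" for y
  proof (cases "\<bar>Y y - x\<bar> \<le> a")
    case True
    then have "x / 2 \<le> Y y" "Y y \<le> 2 * x" using a by auto
    then have "\<bar>R y\<bar> \<le> \<bar>r * (r - 1) * (r - 2)\<bar> / 6 * 2 powr \<bar>r - 3\<bar> * x powr (r - 3) * \<bar>Y y - x\<bar>^3"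
      using powr_taylor2_remainder[OF x] True by (simp add: R_def)
    also have "\<dots> = \<bar>r\<bar> * B * x powr (r - 3) * \<bar>Y y - x\<bar> * (Y y - x)^2"
      by (simp add: B_def abs_mult power2_eq_square power3_eq_cube)
    also have "\<dots> \<le> k * (Y y - x)^2"
      unfolding k_def using True by (intro mult_right_mono mult_left_mono) (auto simp: B_def)
    finally show ?thesis .
  qed (simp add: R_def k_nonneg)
  show "integrable q R"
    by (rule Bochner_Integration.integrable_bound[of _ "\<lambda>y. k * (Y y - x)^2"])
      (use int_d2 R_bound k_nonneg in \<open>auto simp: abs_mult R_def\<close>)
  have "measure_pmf.expectation q (\<lambda>y. (Y y - x)^2) \<le> measure_pmf.expectation q (\<lambda>y. 1 + \<bar>Y y - x\<bar> powr p)"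
    using int abs_powr_le_one_plus_abs_powr[of 2 p] p by (intro integral_mono') auto
  also have "\<dots> \<le> 1 + C" using int bnd by simp
  finally have second_moment: "measure_pmf.expectation q (\<lambda>y. (Y y - x)^2) \<le> 1 + C" .
  have "\<bar>measure_pmf.expectation q R\<bar> \<le> measure_pmf.expectation q (\<lambda>y. \<bar>R y\<bar>)"
    using integral_norm_bound[of q R] by simp
  also have "\<dots> \<le> measure_pmf.expectation q (\<lambda>y. k * (Y y - x)^2)"
    by (intro integral_mono') (use int_d2 R_bound k_nonneg in auto)
  also have "\<dots> \<le> k * (1 + C)"
    using second_moment k_nonneg by (simp add: mult_left_mono)
  also have "\<dots> = \<bar>r\<bar> * x powr (r - 2) * (B * (1 + C) * (a / x))"
    using x powr_diff[of x "r - 2" 1] by (simp add: k_def diff_diff_eq)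
  finally show "\<bar>measure_pmf.expectation q R\<bar>
      \<le> \<bar>r\<bar> * x powr (r - 2) * (\<bar>(r - 1) * (r - 2)\<bar> / 6 * 2 powr \<bar>r - 3\<bar> * (1 + C) * (a / x))"
    by (simp add: B_def)
qed

lemma pmf_truncated_powr_increment_expansion:
  fixes q :: "'a pmf" and Y :: "'a \<Rightarrow> real" and x a p C r :: real
  assumes x: "x > 0" and a: "0 < a" "a \<le> x / 2" and p: "p \<ge> 2"
    and int: "integrable q (\<lambda>y. \<bar>Y y - x\<bar> powr p)"
    and bnd: "measure_pmf.expectation q (\<lambda>y. \<bar>Y y - x\<bar> powr p) \<le> C"
  shows "\<bar>measure_pmf.expectation q (\<lambda>y. if \<bar>Y y - x\<bar> \<le> a then Y y powr r - x powr r else 0)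
      - r * x powr (r - 1) * measure_pmf.expectation q (\<lambda>y. Y y - x)
      - r * (r - 1) / 2 * x powr (r - 2) * measure_pmf.expectation q (\<lambda>y. (Y y - x)^2)\<bar>
    \<le> \<bar>r\<bar> * x powr (r - 2) * (x * a powr (1 - p) * C + \<bar>r - 1\<bar> / 2 * a powr (2 - p) * C
        + \<bar>(r - 1) * (r - 2)\<bar> / 6 * 2 powr \<bar>r - 3\<bar> * (1 + C) * (a / x))"
proof -
  define d where "d y = Y y - x" for y
  define E where "E f = measure_pmf.expectation q f" for f :: "'a \<Rightarrow> real"
  define H where "H f = (\<lambda>y. if \<bar>d y\<bar> \<le> a then f y else 0)" for f :: "'a \<Rightarrow> real"
  define T where "T f = (\<lambda>y. if \<bar>d y\<bar> \<le> a then 0 else f y)" for f :: "'a \<Rightarrow> real"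
  define c1 where "c1 = r * x powr (r - 1)"
  define c2 where "c2 = r * (r - 1) / 2 * x powr (r - 2)"
  define R where "R = H (\<lambda>y. Y y powr r - x powr r - c1 * d y - c2 * (d y)^2)"
  note remainder = pmf_truncated_taylor_remainder_le[OF x a p int bnd, of r,
      folded d_def c1_def c2_def, folded H_def, folded R_def]
  have int_d: "integrable q d"
    by (rule integrable_pmf_dominated_by_moment[OF int[folded d_def], of 1]) (use p in auto)
  have int_d2: "integrable q (\<lambda>y. (d y)^2)"
    by (rule integrable_pmf_dominated_by_moment[OF int[folded d_def], of 2]) (use p in auto)
  have int_H: "integrable q (H f)" and split: "E f = E (H f) + E (T f)" if "integrable q f" for f
    using pmf_expectation_split_if[OF that, where P = "\<lambda>y. \<bar>d y\<bar> \<le> a"]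
    unfolding E_def H_def T_def by simp_all
  have "H (\<lambda>y. Y y powr r - x powr r) = (\<lambda>y. c1 * H d y + c2 * H (\<lambda>y. (d y)^2) y + R y)"
    by (auto simp: H_def R_def)
  then have "E (H (\<lambda>y. Y y powr r - x powr r)) = c1 * E (H d) + c2 * E (H (\<lambda>y. (d y)^2)) + E R"
    using int_H[OF int_d] int_H[OF int_d2] remainder(1) by (simp add: E_def)
  then have expansion: "E (H (\<lambda>y. Y y powr r - x powr r)) - c1 * E d - c2 * E (\<lambda>y. (d y)^2)
      = E R - c1 * E (T d) - c2 * E (T (\<lambda>y. (d y)^2))"
    using split[OF int_d] split[OF int_d2] by (simp add: algebra_simps)
  have "\<bar>E (T d)\<bar> \<le> a powr (1 - p) * C"
    unfolding E_def T_def
    by (rule pmf_tail_expectation_le[OF int[folded d_def] bnd[folded d_def]]) (use p a in auto)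
  then have "\<bar>c1 * E (T d)\<bar> \<le> \<bar>r\<bar> * x powr (r - 1) * (a powr (1 - p) * C)"
    by (simp add: c1_def abs_mult mult_left_mono)
  also have "\<dots> = \<bar>r\<bar> * x powr (r - 2) * (x * a powr (1 - p) * C)"
    using x powr_add[of x 1 "r - 2"] by simp
  finally have first_tail: "\<bar>c1 * E (T d)\<bar> \<le> \<bar>r\<bar> * x powr (r - 2) * (x * a powr (1 - p) * C)" .
  have "\<bar>E (T (\<lambda>y. (d y)^2))\<bar> \<le> a powr (2 - p) * C"
    unfolding E_def T_def
    by (rule pmf_tail_expectation_le[OF int[folded d_def] bnd[folded d_def]]) (use p a in auto)
  then have "\<bar>c2 * E (T (\<lambda>y. (d y)^2))\<bar> \<le> \<bar>r\<bar> * \<bar>r - 1\<bar> / 2 * x powr (r - 2) * (a powr (2 - p) * C)"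
    by (simp add: c2_def abs_mult mult_left_mono)
  then have second_tail:
    "\<bar>c2 * E (T (\<lambda>y. (d y)^2))\<bar> \<le> \<bar>r\<bar> * x powr (r - 2) * (\<bar>r - 1\<bar> / 2 * a powr (2 - p) * C)"
    by (simp add: mult_ac)
  have "\<bar>E (H (\<lambda>y. Y y powr r - x powr r)) - c1 * E d - c2 * E (\<lambda>y. (d y)^2)\<bar>
      \<le> \<bar>r\<bar> * x powr (r - 2) * (x * a powr (1 - p) * C + \<bar>r - 1\<bar> / 2 * a powr (2 - p) * C
        + \<bar>(r - 1) * (r - 2)\<bar> / 6 * 2 powr \<bar>r - 3\<bar> * (1 + C) * (a / x))"
    unfolding expansion distrib_left[of "\<bar>r\<bar> * x powr (r - 2)"] using first_tail second_tail remainder(2)[folded E_def]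
    by linarith
  moreover have "(\<lambda>y. Y y - x) = d" "(\<lambda>y. (Y y - x)^2) = (\<lambda>y. (d y)^2)"
    "(\<lambda>y. if \<bar>Y y - x\<bar> \<le> a then Y y powr r - x powr r else 0) = H (\<lambda>y. Y y powr r - x powr r)"
    by (auto simp: H_def d_def)
  ultimately show ?thesis by (simp add: E_def c1_def c2_def)
qed

lemma powr_expansion_main_term_le:
  fixes x r m v c s \<delta> :: real
  assumes x: "x > 0" and m: "x * \<bar>m - c / x\<bar> \<le> \<delta>" and v: "\<bar>v - s\<bar> \<le> \<delta>"
  shows "\<bar>r * x powr (r - 1) * m + r * (r - 1) / 2 * x powr (r - 2) * v
      - r * x powr (r - 2) * (c + (r - 1) / 2 * s)\<bar> \<le> \<bar>r\<bar> * x powr (r - 2) * (\<delta> + \<bar>r - 1\<bar> / 2 * \<delta>)"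
proof -
  have "r * x powr (r - 1) * m + r * (r - 1) / 2 * x powr (r - 2) * v
      - r * x powr (r - 2) * (c + (r - 1) / 2 * s)
      = r * x powr (r - 2) * (x * (m - c / x) + (r - 1) / 2 * (v - s))"
    using x powr_add[of x 1 "r - 2"] by (simp add: field_simps)
  moreover have "\<bar>x * (m - c / x) + (r - 1) / 2 * (v - s)\<bar> \<le> \<delta> + \<bar>r - 1\<bar> / 2 * \<delta>"
  proof -
    have "\<bar>x * (m - c / x)\<bar> = x * \<bar>m - c / x\<bar>" using x by (simp add: abs_mult)
    moreover have "\<bar>(r - 1) / 2 * (v - s)\<bar> \<le> \<bar>r - 1\<bar> / 2 * \<delta>"
      using v by (simp add: abs_mult mult_left_mono)
    ultimately show ?thesis
      using m abs_triangle_ineq[of "x * (m - c / x)" "(r - 1) / 2 * (v - s)"] by linarith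
  qed
  ultimately show ?thesis by (simp add: abs_mult mult_left_mono)
qed

lemma pmf_truncated_powr_increment_approx:
  fixes q :: "'a pmf" and Y :: "'a \<Rightarrow> real" and x a p C r c s \<delta> :: real
  assumes x: "x > 0" and a: "0 < a" "a \<le> x / 2" and p: "p \<ge> 2"
    and int: "integrable q (\<lambda>y. \<bar>Y y - x\<bar> powr p)"
    and bnd: "measure_pmf.expectation q (\<lambda>y. \<bar>Y y - x\<bar> powr p) \<le> C"
    and drift: "x * \<bar>measure_pmf.expectation q (\<lambda>y. Y y - x) - c / x\<bar> \<le> \<delta>"
    and variance: "\<bar>measure_pmf.expectation q (\<lambda>y. (Y y - x)^2) - s\<bar> \<le> \<delta>"
  shows "\<bar>measure_pmf.expectation q (\<lambda>y. if \<bar>Y y - x\<bar> \<le> a then Y y powr r - x powr r else 0)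
      - r * x powr (r - 2) * (c + (r - 1) / 2 * s)\<bar>
    \<le> \<bar>r\<bar> * x powr (r - 2) * ((\<delta> + \<bar>r - 1\<bar> / 2 * \<delta>) + (x * a powr (1 - p) * C
        + \<bar>r - 1\<bar> / 2 * a powr (2 - p) * C + \<bar>(r - 1) * (r - 2)\<bar> / 6 * 2 powr \<bar>r - 3\<bar> * (1 + C) * (a / x)))"
  using pmf_truncated_powr_increment_expansion[OF x a p int bnd, of r]
    powr_expansion_main_term_le[OF x drift variance, of r]
  unfolding distrib_left[of "\<bar>r\<bar> * x powr (r - 2)"] by linarith

lemma pmf_integrable_expectation_le_of_nn_integral:
  fixes q :: "'a pmf" and f :: "'a \<Rightarrow> real"
  assumes nonneg: "\<And>y. 0 \<le> f y" and le: "(\<integral>\<^sup>+ y. ennreal (f y) \<partial>measure_pmf q) \<le> ennreal C"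
  shows "integrable q f" "measure_pmf.expectation q f \<le> max C 0"
proof -
  show int: "integrable q f"
    using le nonneg by (intro integrableI_nonneg) (auto simp: le_less_trans)
  have "ennreal (measure_pmf.expectation q f) = (\<integral>\<^sup>+ y. ennreal (f y) \<partial>measure_pmf q)"
    using nn_integral_eq_integral[OF int] nonneg by simp
  also have "\<dots> \<le> ennreal (max C 0)"
    using le by (metis ennreal_max_0 max.commute)
  finally show "measure_pmf.expectation q f \<le> max C 0"
    by (subst (asm) ennreal_le_iff) auto
qed

lemma truncation_scale_limits:
  fixes p \<zeta> :: real
  assumes p: "p > 2" and \<zeta>: "1 / (p - 1) < \<zeta>" "\<zeta> < 1"
  shows "((\<lambda>x. x * (x powr \<zeta>) powr (1 - p)) \<longlongrightarrow> 0) at_top"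
    and "((\<lambda>x. (x powr \<zeta>) powr (2 - p)) \<longlongrightarrow> 0) at_top"
    and "((\<lambda>x. x powr \<zeta> / x) \<longlongrightarrow> 0) at_top"
proof -
  have \<zeta>_p: "\<zeta> * (p - 1) > 1" using \<zeta>(1) p by (simp add: divide_less_eq mult.commute)
  have \<zeta>_pos: "\<zeta> > 0" using \<zeta>(1) p by (smt (verit) divide_pos_pos)
  have x_pos: "\<forall>\<^sub>F x in at_top. (x::real) > 0" by (rule eventually_gt_at_top)
  have "((\<lambda>x. x powr (1 + \<zeta> * (1 - p))) \<longlongrightarrow> 0) at_top"
    using \<zeta>_p by (intro tendsto_neg_powr filterlim_ident) (simp add: algebra_simps)
  moreover have "\<forall>\<^sub>F x in at_top. x powr (1 + \<zeta> * (1 - p)) = x * (x powr \<zeta>) powr (1 - p)"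
    using x_pos by eventually_elim (simp add: powr_powr powr_add)
  ultimately show "((\<lambda>x. x * (x powr \<zeta>) powr (1 - p)) \<longlongrightarrow> 0) at_top"
    by (rule Lim_transform_eventually)
  have "((\<lambda>x. x powr (\<zeta> * (2 - p))) \<longlongrightarrow> 0) at_top"
    using \<zeta>_pos p by (intro tendsto_neg_powr filterlim_ident) (simp add: mult_pos_neg)
  then show "((\<lambda>x. (x powr \<zeta>) powr (2 - p)) \<longlongrightarrow> 0) at_top"
    by (simp add: powr_powr)
  have "((\<lambda>x. x powr (\<zeta> - 1)) \<longlongrightarrow> 0) at_top"
    using \<zeta>(2) by (intro tendsto_neg_powr filterlim_ident) simp
  moreover have "\<forall>\<^sub>F x in at_top. x powr (\<zeta> - 1) = x powr \<zeta> / x"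
    using x_pos by eventually_elim (simp add: powr_diff)
  ultimately show "((\<lambda>x. x powr \<zeta> / x) \<longlongrightarrow> 0) at_top"
    by (rule Lim_transform_eventually)
qed

theorem lemma3p4:
  fixes \<Sigma> :: "(real \<times> 's::finite) set"
    and K :: "real \<times> 's \<Rightarrow> (real \<times> 's) pmf"
    and p Cp \<zeta> r :: real
    and c s2 :: "'s \<Rightarrow> real"
    and i :: 's
  assumes lf: "locally_finite_state_space \<Sigma>"
    and supp: "\<And>z. z \<in> \<Sigma> \<Longrightarrow> set_pmf (K z) \<subseteq> \<Sigma>"
    and p: "p > 2"
    and moment: "\<And>x j. (x, j) \<in> \<Sigma> \<Longrightarrow>
        (\<integral>\<^sup>+ y. ennreal (\<bar>fst y - x\<bar> powr p) \<partial>measure_pmf (K (x, j))) \<le> ennreal Cp"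
    and s2_nonneg: "\<And>j. s2 j \<ge> 0"
    and s2_nonzero: "\<exists>j. s2 j \<noteq> 0"
    and mu_asymp: "\<And>j \<epsilon>. \<epsilon> > 0 \<Longrightarrow>
        \<forall>\<^sub>F x in at_top. (x, j) \<in> \<Sigma> \<longrightarrow> \<bar>mu K j x - c j / x\<bar> \<le> \<epsilon> / x"
    and sigma_asymp: "\<And>j \<epsilon>. \<epsilon> > 0 \<Longrightarrow>
        \<forall>\<^sub>F x in at_top. (x, j) \<in> \<Sigma> \<longrightarrow> \<bar>sigma2 K j x - s2 j\<bar> \<le> \<epsilon>"
    and zeta: "1 / (p - 1) < \<zeta>" "\<zeta> < 1"
  shows "\<forall>\<epsilon>>0. \<forall>\<^sub>F x in at_top. (x, i) \<in> \<Sigma> \<longrightarrow>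
     \<bar>measure_pmf.expectation (K (x, i))
         (\<lambda>y. if \<bar>fst y - x\<bar> \<le> x powr \<zeta> then fst y powr r - x powr r else 0)
       - r * x powr (r - 2) * (c i + (r - 1) / 2 * s2 i)\<bar>
     \<le> \<epsilon> * \<bar>r\<bar> * x powr (r - 2)"
proof (intro allI impI, goal_cases)
  case (1 \<epsilon>)
  then have \<epsilon>: "\<epsilon> > 0" .
  define C where "C = max Cp 0"
  define \<delta> where "\<delta> = \<epsilon> / (2 + \<bar>r - 1\<bar>)"
  have \<delta>_scale: "\<delta> * (2 + \<bar>r - 1\<bar>) = \<epsilon>"
    unfolding \<delta>_def by (smt (verit) nonzero_eq_divide_eq abs_ge_zero)
  have \<delta>: "\<delta> > 0" "\<delta> + \<bar>r - 1\<bar> / 2 * \<delta> = \<epsilon> / 2"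
    using \<epsilon> by (simp add: \<delta>_def) (use \<delta>_scale in \<open>simp add: algebra_simps\<close>)
  define err where "err x = x * (x powr \<zeta>) powr (1 - p) * C + \<bar>r - 1\<bar> / 2 * (x powr \<zeta>) powr (2 - p) * C
      + \<bar>(r - 1) * (r - 2)\<bar> / 6 * 2 powr \<bar>r - 3\<bar> * (1 + C) * (x powr \<zeta> / x)" for x
  note limits = truncation_scale_limits[OF p zeta]
  have "(err \<longlongrightarrow> 0) at_top"
    unfolding err_def using limits
    by (intro tendsto_add_zero tendsto_mult_right_zero tendsto_mult_left_zero)
  then have small_err: "\<forall>\<^sub>F x in at_top. err x < \<epsilon> / 2"
    using \<epsilon> by (intro order_tendstoD(2)) auto
  have small_window: "\<forall>\<^sub>F x in at_top. x powr \<zeta> / x < 1 / 2"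
    using limits(3) by (intro order_tendstoD(2)) auto
  show ?case
    using small_err small_window eventually_gt_at_top[of 0] mu_asymp[OF \<delta>(1), of i] sigma_asymp[OF \<delta>(1), of i]
  proof eventually_elim
    case (elim x)
    show ?case (is "_ \<longrightarrow> ?deviation \<le> ?bound")
    proof
      assume x_in: "(x, i) \<in> \<Sigma>"
      have x: "x > 0" and window: "0 < x powr \<zeta>" "x powr \<zeta> \<le> x / 2"
        using elim by (auto simp: divide_less_eq)
      note moments = pmf_integrable_expectation_le_of_nn_integral[OF _ moment[OF x_in], folded C_def]
      have drift: "x * \<bar>measure_pmf.expectation (K (x, i)) (\<lambda>y. fst y - x) - c i / x\<bar> \<le> \<delta>"
        using elim x_in x by (simp add: mu_def field_simps)
      have variance: "\<bar>measure_pmf.expectation (K (x, i)) (\<lambda>y. (fst y - x)^2) - s2 i\<bar> \<le> \<delta>"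
        using elim x_in by (simp add: sigma2_def)
      have "?deviation \<le> \<bar>r\<bar> * x powr (r - 2) * ((\<delta> + \<bar>r - 1\<bar> / 2 * \<delta>) + err x)"
        using pmf_truncated_powr_increment_approx[OF x window _ moments drift variance] p
        by (simp add: err_def)
      also have "\<dots> \<le> \<bar>r\<bar> * x powr (r - 2) * \<epsilon>"
        using elim \<delta>(2) by (intro mult_left_mono) auto
      also have "\<dots> = \<epsilon> * \<bar>r\<bar> * x powr (r - 2)"
        by simp
      finally show "?deviation \<le> ?bound" .
    qed
  qed
qed

end
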